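(* Let $[m]=X_1\cup\dots\cup X_k$ with the $X_i$ pairwise disjoint sets of size $n$, let $v_i$ be the smallest element of $X_i$, and let $k\ge\ell\ge\ell'\ge t\ge1$. Suppose that $\mathcal{F}\subseteq\mathcal{H}(n,k,\ell)$ and $\mathcal{G}\subseteq\mathcal{H}(n,k,\ell')$ are shifted and cross $t$-intersecting. Then $\mathcal{A}(\mathcal{F})\subseteq\{A\subseteq[k]:|A|\le\ell\}$ and $\mathcal{A}(\mathcal{G})\subseteq\{A\subseteq[k]:|A|\le\ell'\}$ are cross $t$-intersecting.
   Context: Here $m=kn$ with the natural order on $[m]$. $\mathcal{H}(n,k,\ell)=\{H\subseteq[m]:|H|=\ell,\ |H\cap X_i|\le1\ \forall i\in[k]\}$. For a family $\mathcal{F}$ of subsets and $i<j$, the shifting operator is $s_{i,j}(\mathcal{F})=\{s_{i,j}(F):F\in\mathcal{F}\}$ where $s_{i,j}(F)=(F\setminus\{j\})\cup\{i\}$ if $j\in F$, $i\notin F$ and $(F\setminus\{j\})\cup\{i\}\notin\mathcal{F}$, and $s_{i,j}(F)=F$ otherwise. A family $\mathcal{F}\subseteq\mathcal{H}(n,k,\ell)$ is shifted if $s_{i,j}(\mathcal{F})=\mathcal{F}$ for all $i<j$ lying in the same $X_a$ for some $a\in[k]$. For $H\in\mathcal{H}(n,k,\ell)$, $A(H)=\{i\in[k]: H\cap X_i=\{v_i\}\}$, and $\mathcal{A}(\mathcal{F})=\{A(F):F\in\mathcal{F}\}$. Families $\mathcal{F},\mathcal{G}$ are cross $t$-intersecting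 if $|F\cap G|\ge t$ for all $F\in\mathcal{F},G\in\mathcal{G}$. *)

theory Defs
  imports Main
begin

definition H_fam :: "(nat \<Rightarrow> nat set) \<Rightarrow> nat \<Rightarrow> nat \<Rightarrow> nat \<Rightarrow> nat set set" where
  "H_fam X m k l = {H. H \<subseteq> {1..m} \<and> card H = l \<and> (\<forall>i\<in>{1..k}. card (H \<inter> X i) \<le> 1)}"

definition shift_set :: "nat \<Rightarrow> nat \<Rightarrow> nat set set \<Rightarrow> nat set \<Rightarrow> nat set" where
  "shift_set i j \<F> F =
     (if j \<in> F \<and> i \<notin> F \<and> (F - {j}) \<union> {i} \<notin> \<F> then (F - {j}) \<union> {i} else F)"

definition shift_fam :: "nat \<Rightarrow> nat \<Rightarrow> nat set set \<Rightarrow> nat set set" where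
  "shift_fam i j \<F> = shift_set i j \<F> ` \<F>"

definition shifted :: "(nat \<Rightarrow> nat set) \<Rightarrow> nat \<Rightarrow> nat set set \<Rightarrow> bool" where
  "shifted X k \<F> \<longleftrightarrow>
     (\<forall>a\<in>{1..k}. \<forall>i j. i \<in> X a \<and> j \<in> X a \<and> i < j \<longrightarrow> shift_fam i j \<F> = \<F>)"

definition A_of :: "(nat \<Rightarrow> nat set) \<Rightarrow> nat \<Rightarrow> nat set \<Rightarrow> nat set" where
  "A_of X k H = {i \<in> {1..k}. H \<inter> X i = {Min (X i)}}"

definition A_fam :: "(nat \<Rightarrow> nat set) \<Rightarrow> nat \<Rightarrow> nat set set \<Rightarrow> nat set set" where
  "A_fam X k \<F> = A_of X k ` \<F>"

definition cross_t_int :: "nat \<Rightarrow> 'a set set \<Rightarrow> 'a set set \<Rightarrow> bool" where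
  "cross_t_int t \<F> \<G> \<longleftrightarrow> (\<forall>F\<in>\<F>. \<forall>G\<in>\<G>. t \<le> card (F \<inter> G))"

end

theory Submission
  imports Defs
begin

text \<open>Call the minima \<open>v\<^sub>i = Min (X i)\<close> of the blocks the base points. Since a member of
  \<open>\<H>(n,k,\<ell>)\<close> meets every block at most once, \<open>i \<mapsto> v\<^sub>i\<close> maps \<open>A(F) \<inter> A(G)\<close> bijectively
  onto \<open>F \<inter> G \<inter> {v\<^sub>1,\<dots>,v\<^sub>k}\<close>, so it suffices to show that \<open>F \<inter> G\<close> contains at least \<open>t\<close> base
  points. If \<open>x \<in> F \<inter> G\<close> is not a base point, say \<open>x \<in> X\<^sub>a\<close>, then \<open>v\<^sub>a\<close> lies in neither \<open>F\<close>
  nor \<open>G\<close>, and shiftedness gives \<open>F' = F - {x} \<union> {v\<^sub>a} \<in> \<F>\<close>. Passing from \<open>F\<close> to \<open>F'\<close> keeps the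
  base points of \<open>F \<inter> G\<close> and removes \<open>x\<close>; after finitely many such steps \<open>F \<inter> G\<close> consists of
  base points only, and it still has at least \<open>t\<close> elements.\<close>

lemma shifted_shift_mem:
  assumes "shifted X k \<F>" "a \<in> {1..k}" "i \<in> X a" "j \<in> X a" "i < j"
    and "F \<in> \<F>" "j \<in> F" "i \<notin> F"
  shows "F - {j} \<union> {i} \<in> \<F>"
proof (rule ccontr)
  assume not_mem: "F - {j} \<union> {i} \<notin> \<F>"
  have "shift_set i j \<F> F \<in> shift_fam i j \<F>"
    using \<open>F \<in> \<F>\<close> unfolding shift_fam_def by blast
  also have "shift_fam i j \<F> = \<F>"
    using assms(1-5) unfolding shifted_def by blast
  finally show False
    using not_mem assms(7,8) unfolding shift_set_def by simp
qed

locale finite_disjoint_blocks =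
  fixes X :: "nat \<Rightarrow> nat set" and k :: nat
  assumes finite_block: "i \<in> {1..k} \<Longrightarrow> finite (X i)"
    and disjoint_blocks: "i \<in> {1..k} \<Longrightarrow> j \<in> {1..k} \<Longrightarrow> i \<noteq> j \<Longrightarrow> X i \<inter> X j = {}"
begin

definition partial_transversal :: "nat set \<Rightarrow> bool" where
  "partial_transversal H \<longleftrightarrow> H \<subseteq> (\<Union>i\<in>{1..k}. X i) \<and> (\<forall>i\<in>{1..k}. card (H \<inter> X i) \<le> 1)"

definition block_mins :: "nat set" where
  "block_mins = {Min (X i) | i. i \<in> {1..k} \<and> X i \<noteq> {}}"

lemma partial_transversal_finite:
  assumes "partial_transversal H"
  shows "finite H"
proof (rule finite_subset)
  show "H \<subseteq> (\<Union>i\<in>{1..k}. X i)"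
    using assms unfolding partial_transversal_def by blast
  show "finite (\<Union>i\<in>{1..k}. X i)"
    using finite_block by blast
qed

lemma partial_transversal_block_eq:
  assumes "partial_transversal H" "i \<in> {1..k}" "x \<in> H \<inter> X i"
  shows "H \<inter> X i = {x}"
proof -
  have "card (H \<inter> X i) \<le> Suc 0"
    using assms(1,2) unfolding partial_transversal_def by simp
  moreover have "finite (H \<inter> X i)"
    using finite_block[OF assms(2)] by blast
  ultimately have "\<forall>y\<in>H \<inter> X i. \<forall>z\<in>H \<inter> X i. y = z"
    using card_le_Suc0_iff_eq by blast
  then show ?thesis
    using assms(3) by blast
qed

lemma Min_block_in: "i \<in> {1..k} \<Longrightarrow> X i \<noteq> {} \<Longrightarrow> Min (X i) \<in> X i"
  using finite_block by (rule Min_in)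

lemma inj_on_block_Min: "inj_on (\<lambda>i. Min (X i)) {i \<in> {1..k}. X i \<noteq> {}}"
proof (rule inj_onI)
  fix i j
  assume "i \<in> {i \<in> {1..k}. X i \<noteq> {}}" "j \<in> {i \<in> {1..k}. X i \<noteq> {}}" "Min (X i) = Min (X j)"
  then have "Min (X i) \<in> X i \<inter> X j"
    using Min_block_in by force
  then show "i = j"
    using disjoint_blocks \<open>i \<in> _\<close> \<open>j \<in> _\<close> by blast
qed

lemma A_of_subset: "A_of X k H \<subseteq> {i \<in> {1..k}. X i \<noteq> {}}"
  unfolding A_of_def by auto

lemma image_Min_A_of:
  assumes "partial_transversal H"
  shows "(\<lambda>i. Min (X i)) ` A_of X k H = H \<inter> block_mins"
proof
  show "(\<lambda>i. Min (X i)) ` A_of X k H \<subseteq> H \<inter> block_mins"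
    unfolding A_of_def block_mins_def by blast
  show "H \<inter> block_mins \<subseteq> (\<lambda>i. Min (X i)) ` A_of X k H"
  proof
    fix y
    assume "y \<in> H \<inter> block_mins"
    then obtain i where i: "i \<in> {1..k}" "X i \<noteq> {}" "y = Min (X i)" "y \<in> H"
      unfolding block_mins_def by blast
    then have "H \<inter> X i = {y}"
      using partial_transversal_block_eq[OF assms] Min_block_in by blast
    then show "y \<in> (\<lambda>i. Min (X i)) ` A_of X k H"
      using i unfolding A_of_def by blast
  qed
qed

lemma card_A_of_Int:
  assumes "partial_transversal F" "partial_transversal G"
  shows "card (A_of X k F \<inter> A_of X k G) = card (F \<inter> G \<inter> block_mins)"
proof -
  have "card (A_of X k F \<inter> A_of X k G) = card ((\<lambda>i. Min (X i)) ` (A_of X k F \<inter> A_of X k G))"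
    using inj_on_block_Min A_of_subset by (metis card_image inj_on_subset le_infI1)
  also have "(\<lambda>i. Min (X i)) ` (A_of X k F \<inter> A_of X k G)
      = (\<lambda>i. Min (X i)) ` A_of X k F \<inter> (\<lambda>i. Min (X i)) ` A_of X k G"
    by (intro inj_on_image_Int[OF inj_on_block_Min] A_of_subset)
  also have "\<dots> = F \<inter> G \<inter> block_mins"
    using image_Min_A_of assms by auto
  finally show ?thesis .
qed

lemma shifted_block_Min_mem:
  assumes "shifted X k \<F>" "F \<in> \<F>" "partial_transversal F"
    and "a \<in> {1..k}" "x \<in> F \<inter> X a" "x \<noteq> Min (X a)"
  shows "F - {x} \<union> {Min (X a)} \<in> \<F>"
proof (rule shifted_shift_mem[OF assms(1,4) _ _ _ assms(2)])
  have "X a \<noteq> {}"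
    using assms(5) by blast
  then show "Min (X a) \<in> X a"
    using Min_block_in assms(4) by blast
  then show "Min (X a) \<notin> F"
    using partial_transversal_block_eq[OF assms(3-5)] assms(6) by auto
  show "Min (X a) < x"
    using Min_le[OF finite_block[OF assms(4)]] assms(5,6) by force
qed (use assms(5) in auto)

lemma card_Int_block_mins_ge:
  assumes "shifted X k \<F>" "\<forall>F\<in>\<F>. partial_transversal F" "partial_transversal G"
    and "\<forall>F\<in>\<F>. t \<le> card (F \<inter> G)" "F \<in> \<F>"
  shows "t \<le> card (F \<inter> G \<inter> block_mins)"
proof -
  have finite_G: "finite G"
    using assms(3) by (rule partial_transversal_finite)
  have "t \<le> card (F \<inter> G \<inter> block_mins)" if "F \<in> \<F>" "card (F \<inter> G - block_mins) = d" for F d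
    using that
  proof (induction d arbitrary: F)
    case 0
    then have "F \<inter> G \<inter> block_mins = F \<inter> G"
      using finite_G by auto
    then show ?case
      using assms(4) 0 by simp
  next
    case (Suc d)
    then obtain x where x: "x \<in> F \<inter> G" "x \<notin> block_mins"
      by (metis Diff_iff card.empty ex_in_conv nat.distinct(1))
    obtain a where a: "a \<in> {1..k}" "x \<in> X a"
      using assms(2) Suc.prems(1) x(1) unfolding partial_transversal_def by blast
    define v where "v = Min (X a)"
    have v: "v \<in> X a" "v \<in> block_mins"
      using Min_block_in a unfolding v_def block_mins_def by blast+
    have "x \<noteq> v"
      using x(2) v(2) by blast
    have "G \<inter> X a = {x}"
      using partial_transversal_block_eq[OF assms(3) a(1)] a(2) x(1) by blast
    then have "v \<notin> G"
      using v(1) \<open>x \<noteq> v\<close> by auto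
    define F' where "F' = F - {x} \<union> {v}"
    have "F' \<inter> G - block_mins = (F \<inter> G - block_mins) - {x}"
      unfolding F'_def using v(2) by blast
    then have "card (F' \<inter> G - block_mins) = d"
      using Suc.prems(2) x finite_G by simp
    moreover have "F' \<in> \<F>"
      using shifted_block_Min_mem[OF assms(1) Suc.prems(1) _ a(1)] assms(2) Suc.prems(1)
        a(2) x(1) \<open>x \<noteq> v\<close> unfolding F'_def v_def by blast
    moreover have "F' \<inter> G \<inter> block_mins = F \<inter> G \<inter> block_mins"
      unfolding F'_def using \<open>v \<notin> G\<close> x(2) by blast
    ultimately show ?case
      using Suc.IH by metis
  qed
  then show ?thesis
    using assms(5) by blast
qed

lemma card_A_of_le: "partial_transversal H \<Longrightarrow> card (A_of X k H) \<le> card H"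
  using card_A_of_Int[of H H] partial_transversal_finite by (simp add: card_mono)

lemma H_fam_partial_transversal:
  "(\<Union>i\<in>{1..k}. X i) = {1..m} \<Longrightarrow> H \<in> H_fam X m k l \<Longrightarrow> partial_transversal H"
  unfolding partial_transversal_def H_fam_def by auto

lemma A_fam_H_fam_subset:
  assumes "(\<Union>i\<in>{1..k}. X i) = {1..m}" "\<H> \<subseteq> H_fam X m k r"
  shows "A_fam X k \<H> \<subseteq> {A. A \<subseteq> {1..k} \<and> card A \<le> r}"
proof (unfold A_fam_def, rule image_subsetI)
  fix H
  assume "H \<in> \<H>"
  then have "H \<in> H_fam X m k r"
    using assms(2) by blast
  then have "partial_transversal H" "card H = r"
    using H_fam_partial_transversal[OF assms(1)] by (simp_all add: H_fam_def)
  then have "card (A_of X k H) \<le> r"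
    using card_A_of_le by blast
  moreover have "A_of X k H \<subseteq> {1..k}"
    using A_of_subset by blast
  ultimately show "A_of X k H \<in> {A. A \<subseteq> {1..k} \<and> card A \<le> r}"
    by simp
qed

lemma cross_t_int_A_fam:
  assumes "shifted X k \<F>" "\<forall>F\<in>\<F>. partial_transversal F" "\<forall>G\<in>\<G>. partial_transversal G"
    and "cross_t_int t \<F> \<G>"
  shows "cross_t_int t (A_fam X k \<F>) (A_fam X k \<G>)"
proof -
  have "t \<le> card (A_of X k F \<inter> A_of X k G)" if "F \<in> \<F>" "G \<in> \<G>" for F G
  proof -
    have "\<forall>F\<in>\<F>. t \<le> card (F \<inter> G)"
      using assms(4) that(2) unfolding cross_t_int_def by blast
    then have "t \<le> card (F \<inter> G \<inter> block_mins)"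
      using card_Int_block_mins_ge[OF assms(1,2)] assms(3) that by blast
    then show ?thesis
      using card_A_of_Int assms(2,3) that by simp
  qed
  then show ?thesis
    by (simp add: cross_t_int_def A_fam_def)
qed

end

theorem lemma3p2:
  fixes X :: "nat \<Rightarrow> nat set" and n k m l l' t :: nat
    and \<F> \<G> :: "nat set set"
  assumes m_def: "m = k * n"
    and cover: "(\<Union>i\<in>{1..k}. X i) = {1..m}"
    and disj: "\<forall>i\<in>{1..k}. \<forall>j\<in>{1..k}. i \<noteq> j \<longrightarrow> X i \<inter> X j = {}"
    and size: "\<forall>i\<in>{1..k}. card (X i) = n"
    and params: "k \<ge> l" "l \<ge> l'" "l' \<ge> t" "t \<ge> 1"
    and F_sub: "\<F> \<subseteq> H_fam X m k l"
    and G_sub: "\<G> \<subseteq> H_fam X m k l'"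
    and F_sh: "shifted X k \<F>"
    and G_sh: "shifted X k \<G>"
    and cross: "cross_t_int t \<F> \<G>"
  shows "A_fam X k \<F> \<subseteq> {A. A \<subseteq> {1..k} \<and> card A \<le> l} \<and>
         A_fam X k \<G> \<subseteq> {A. A \<subseteq> {1..k} \<and> card A \<le> l'} \<and>
         cross_t_int t (A_fam X k \<F>) (A_fam X k \<G>)"
proof -
  interpret finite_disjoint_blocks X k
  proof
    fix i
    assume "i \<in> {1..k}"
    then have "X i \<subseteq> {1..m}"
      using cover by blast
    then show "finite (X i)"
      by (rule finite_subset) simp
  qed (use disj in blast)
  have "\<forall>F\<in>\<F>. partial_transversal F" "\<forall>G\<in>\<G>. partial_transversal G"
    using F_sub G_sub by (blast intro: H_fam_partial_transversal[OF cover])+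
  then have "cross_t_int t (A_fam X k \<F>) (A_fam X k \<G>)"
    using cross_t_int_A_fam[OF F_sh] cross by blast
  with A_fam_H_fam_subset[OF cover F_sub] A_fam_H_fam_subset[OF cover G_sub] show ?thesis
    by (intro conjI)
qed

end
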